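(* In the setting described in the context, let a stochastic Runge--Kutta method with stages $s$ and random coefficients $Z^{m,n}_{ij}$, $z^{m,n}_i$ be given, and use the same coefficients in the (local) SRK Lawson scheme and in the global SRK Lawson scheme. Then the two schemes produce the same sequence of approximations: $e^{\bar L^0_n}V^0_n=Y_n$ for all $n=0,1,\dots,N$.
   Context: Setting: $d,M\in\mathbb{N}$, $t_0<T$, grid $t_0<t_1<\dots<t_N=T$ with $h=(T-t_0)/N$, $t_n=t_0+nh$. $A_0,\dots,A_M\in\mathbb{R}^{d\times d}$ pairwise commute; $g_m:[t_0,T]\times\mathbb{R}^d\to\mathbb{R}^d$; $\gamma^\star=\tfrac12$ (Itô interpretation) or $\gamma^\star=0$ (Stratonovich interpretation). Set $\Lambda=A_0-\gamma^\star\sum_{m=1}^MA_m^2$, $\tilde g_0=g_0-2\gamma^\star\sum_{m=1}^MA_mg_m$, $\tilde g_m=g_m$ ($m\ge1$). For the SRK coefficients put $c^{n,i}_m=\sum_{j=1}^sZ^{m,n}_{ij}$, $c^n_m=\sum_{i=1}^sz^{m,n}_i$, and assume $c^n_0=h$. Stage equations are assumed uniquely solvable so that both schemes are well defined. Local SRK Lawson scheme: $Y_0=x_0$; for $n=0,\dots,N-1$, with $\Delta L^n_i=\Lambda c^{n,i}_0+\sum_{m=1}^MA_mc^{n,i}_m$ and $\Delta L^n=\Lambda c^n_0+\sum_{m=1}^MA_mc^n_m$, $H_i=Y_n+\sum_{j=1}^s\sum_{m=0}^MZ^{m,n}_{ij}e^{-\Delta L^n_j}\tilde g_m(t_n+c^{n,j}_0,e^{\Delta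 L^n_j}H_j)$, $V^n_{n+1}=Y_n+\sum_{i=1}^s\sum_{m=0}^Mz^{m,n}_ie^{-\Delta L^n_i}\tilde g_m(t_n+c^{n,i}_0,e^{\Delta L^n_i}H_i)$, $Y_{n+1}=e^{\Delta L^n}V^n_{n+1}$. Global SRK Lawson scheme: given $W^0\in\mathbb{R}^{M+1}$ with $W^0_0=t_0$ and $V^0_0=x_0$; for $n=0,\dots,N-1$, with $L^{0,n}_i=\Lambda(t_n+c^{n,i}_0-t_0)+\sum_{m=1}^MA_m(W^n_m+c^{n,i}_m-W^0_m)$, $H^0_i=V^0_n+\sum_{j=1}^s\sum_{m=0}^MZ^{m,n}_{ij}e^{-L^{0,n}_j}\tilde g_m(t_n+c^{n,j}_0,e^{L^{0,n}_j}H^0_j)$, $V^0_{n+1}=V^0_n+\sum_{i=1}^s\sum_{m=0}^Mz^{m,n}_ie^{-L^{0,n}_i}\tilde g_m(t_n+c^{n,i}_0,e^{L^{0,n}_i}H^0_i)$, $W^{n+1}_m=W^n_m+c^n_m$ ($m=0,\dots,M$); its output is $e^{\bar L^0_n}V^0_n$ with $\bar L^0_n=\Lambda(t_n-t_0)+\sum_{m=1}^MA_m(W^n_m-W^0_m)$. *)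

theory Defs
  imports "HOL-Analysis.Analysis"
begin

primrec matpow :: "real^'n^'n \<Rightarrow> nat \<Rightarrow> real^'n^'n" where
  "matpow A 0 = mat 1"
| "matpow A (Suc k) = A ** matpow A k"

definition mexp :: "real^'n^'n \<Rightarrow> real^'n^'n" where
  "mexp A = (\<Sum>k. (1 / fact k) *\<^sub>R matpow A k)"

text \<open>Index conventions: matrices/noises m = 0..M, stages i,j = 0..s-1
  (instead of 1..s), coefficient arrays Z m n i j and z m n i.\<close>

definition Lam :: "(nat \<Rightarrow> real^'d^'d) \<Rightarrow> real \<Rightarrow> nat \<Rightarrow> real^'d^'d" where
  "Lam A \<gamma> M = A 0 - \<gamma> *\<^sub>R (\<Sum>m\<in>{1..M}. A m ** A m)"

definition gtil :: "(nat \<Rightarrow> real^'d^'d) \<Rightarrow> (nat \<Rightarrow> real \<Rightarrow> real^'d \<Rightarrow> real^'d) \<Rightarrow> real \<Rightarrow> nat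
    \<Rightarrow> nat \<Rightarrow> real \<Rightarrow> real^'d \<Rightarrow> real^'d" where
  "gtil A g \<gamma> M m t x =
     (if m = 0 then g 0 t x - (2 * \<gamma>) *\<^sub>R (\<Sum>k\<in>{1..M}. A k *v g k t x) else g m t x)"

definition cst :: "(nat \<Rightarrow> nat \<Rightarrow> nat \<Rightarrow> nat \<Rightarrow> real) \<Rightarrow> nat \<Rightarrow> nat \<Rightarrow> nat \<Rightarrow> nat \<Rightarrow> real" where
  "cst Z s m n i = (\<Sum>j<s. Z m n i j)"

definition cfull :: "(nat \<Rightarrow> nat \<Rightarrow> nat \<Rightarrow> real) \<Rightarrow> nat \<Rightarrow> nat \<Rightarrow> nat \<Rightarrow> real" where
  "cfull z s m n = (\<Sum>i<s. z m n i)"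

definition rk_incr :: "nat \<Rightarrow> nat \<Rightarrow> (nat \<Rightarrow> nat \<Rightarrow> real) \<Rightarrow> (nat \<Rightarrow> real^'d^'d) \<Rightarrow> (nat \<Rightarrow> real)
    \<Rightarrow> (nat \<Rightarrow> real \<Rightarrow> real^'d \<Rightarrow> real^'d) \<Rightarrow> (nat \<Rightarrow> real^'d) \<Rightarrow> real^'d" where
  "rk_incr s M w L tau G H =
     (\<Sum>j<s. \<Sum>m\<le>M. w m j *\<^sub>R (mexp (- L j) *v G m (tau j) (mexp (L j) *v H j)))"

definition dLi :: "(nat \<Rightarrow> real^'d^'d) \<Rightarrow> real \<Rightarrow> nat \<Rightarrow> nat \<Rightarrow> (nat \<Rightarrow> nat \<Rightarrow> nat \<Rightarrow> nat \<Rightarrow> real)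
    \<Rightarrow> nat \<Rightarrow> nat \<Rightarrow> real^'d^'d" where
  "dLi A \<gamma> M s Z n i = cst Z s 0 n i *\<^sub>R Lam A \<gamma> M + (\<Sum>m\<in>{1..M}. cst Z s m n i *\<^sub>R A m)"

definition dL :: "(nat \<Rightarrow> real^'d^'d) \<Rightarrow> real \<Rightarrow> nat \<Rightarrow> nat \<Rightarrow> (nat \<Rightarrow> nat \<Rightarrow> nat \<Rightarrow> real)
    \<Rightarrow> nat \<Rightarrow> real^'d^'d" where
  "dL A \<gamma> M s z n = cfull z s 0 n *\<^sub>R Lam A \<gamma> M + (\<Sum>m\<in>{1..M}. cfull z s m n *\<^sub>R A m)"

definition Lgi :: "(nat \<Rightarrow> real^'d^'d) \<Rightarrow> real \<Rightarrow> nat \<Rightarrow> nat \<Rightarrow> (nat \<Rightarrow> nat \<Rightarrow> nat \<Rightarrow> nat \<Rightarrow> real)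
    \<Rightarrow> real \<Rightarrow> real \<Rightarrow> (nat \<Rightarrow> nat \<Rightarrow> real) \<Rightarrow> nat \<Rightarrow> nat \<Rightarrow> real^'d^'d" where
  "Lgi A \<gamma> M s Z t0 tn W n i =
     (tn + cst Z s 0 n i - t0) *\<^sub>R Lam A \<gamma> M
     + (\<Sum>m\<in>{1..M}. (W n m + cst Z s m n i - W 0 m) *\<^sub>R A m)"

definition Lbar :: "(nat \<Rightarrow> real^'d^'d) \<Rightarrow> real \<Rightarrow> nat \<Rightarrow> real \<Rightarrow> real \<Rightarrow> (nat \<Rightarrow> nat \<Rightarrow> real)
    \<Rightarrow> nat \<Rightarrow> real^'d^'d" where
  "Lbar A \<gamma> M t0 tn W n =
     (tn - t0) *\<^sub>R Lam A \<gamma> M + (\<Sum>m\<in>{1..M}. (W n m - W 0 m) *\<^sub>R A m)"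

definition grid :: "real \<Rightarrow> real \<Rightarrow> nat \<Rightarrow> nat \<Rightarrow> real" where
  "grid t0 T N n = t0 + real n * ((T - t0) / real N)"

definition loc_stages where
  "loc_stages A g \<gamma> M s Z t0 T N n y H \<longleftrightarrow>
     (\<forall>i<s. H i = y + rk_incr s M (\<lambda>m j. Z m n i j) (dLi A \<gamma> M s Z n)
                     (\<lambda>j. grid t0 T N n + cst Z s 0 n j) (gtil A g \<gamma> M) H)"

definition glob_stages where
  "glob_stages A g \<gamma> M s Z t0 T N W n v H \<longleftrightarrow>
     (\<forall>i<s. H i = v + rk_incr s M (\<lambda>m j. Z m n i j) (Lgi A \<gamma> M s Z t0 (grid t0 T N n) W n)
                     (\<lambda>j. grid t0 T N n + cst Z s 0 n j) (gtil A g \<gamma> M) H)"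

end

theory Submission
  imports Defs
begin

(* With V = exp(-Lbar) Y the global scheme is the local one in disguise. All exponents
   Lbar^0_n, DeltaL^n_i, DeltaL^n are real linear combinations of Lambda and the A_m, so they
   commute, and L^{0,n}_i = Lbar^0_n + DeltaL^n_i, Lbar^0_{n+1} = DeltaL^n + Lbar^0_n.
   Hence exp(Lbar^0_n) can be pulled through the global Lawson increment, where it turns
   exp(-L^{0,n}_j) g(exp(L^{0,n}_j) H^0_j) into exp(-DeltaL^n_j) g(exp(DeltaL^n_j) exp(Lbar^0_n) H^0_j).
   So the vectors exp(Lbar^0_n) H^0_i solve the local stage equations and, by uniqueness, are
   the local stages; induction on n follows.
   The law exp(X + Y) = exp X exp Y for commuting matrices is inherited from the Banach
   algebra of bounded linear operators on real^'n, into which the matrices embed. *)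

(* Type classes cannot be instantiated for the diagonal 'a \<Rightarrow>\<^sub>L 'a alone, hence this copy. *)
typedef (overloaded) 'a endo = "UNIV :: ('a::real_normed_vector \<Rightarrow>\<^sub>L 'a) set"
  by simp

setup_lifting type_definition_endo

instantiation endo :: (real_normed_vector) real_normed_vector
begin
lift_definition norm_endo :: "'a endo \<Rightarrow> real" is norm .
lift_definition zero_endo :: "'a endo" is 0 .
lift_definition plus_endo :: "'a endo \<Rightarrow> 'a endo \<Rightarrow> 'a endo" is "(+)" .
lift_definition minus_endo :: "'a endo \<Rightarrow> 'a endo \<Rightarrow> 'a endo" is "(-)" .
lift_definition uminus_endo :: "'a endo \<Rightarrow> 'a endo" is uminus .
lift_definition scaleR_endo :: "real \<Rightarrow> 'a endo \<Rightarrow> 'a endo" is scaleR .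
definition dist_endo :: "'a endo \<Rightarrow> 'a endo \<Rightarrow> real" where
  "dist_endo x y = norm (x - y)"
definition uniformity_endo :: "('a endo \<times> 'a endo) filter" where
  "uniformity_endo = (INF e\<in>{0<..}. principal {(x, y). dist x y < e})"
definition open_endo :: "'a endo set \<Rightarrow> bool" where
  "open_endo S \<longleftrightarrow> (\<forall>x\<in>S. \<forall>\<^sub>F (x', y) in uniformity. x' = x \<longrightarrow> y \<in> S)"
definition sgn_endo :: "'a endo \<Rightarrow> 'a endo" where
  "sgn_endo x = inverse (norm x) *\<^sub>R x"
instance
  by standard (unfold dist_endo_def uniformity_endo_def open_endo_def sgn_endo_def,
      (transfer, simp add: algebra_simps norm_triangle_ineq)+)
end

instantiation endo :: ("{real_normed_vector, perfect_space}") real_normed_algebra_1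
begin
lift_definition one_endo :: "'a endo" is id_blinfun .
lift_definition times_endo :: "'a endo \<Rightarrow> 'a endo \<Rightarrow> 'a endo" is "(o\<^sub>L)" .
instance
proof
  show "norm (1 :: 'a endo) = 1"
    by transfer simp
  then show "(0 :: 'a endo) \<noteq> 1"
    by (metis norm_zero zero_neq_one)
qed (transfer, auto intro!: blinfun_eqI simp: blinfun.bilinear_simps norm_blinfun_compose)+
end

lemma dist_Rep_endo: "dist (Rep_endo x) (Rep_endo y) = dist x y"
  by (simp add: dist_norm dist_endo_def norm_endo.rep_eq minus_endo.rep_eq)

instance endo :: (banach) banach
proof
  fix X :: "nat \<Rightarrow> 'a endo"
  assume "Cauchy X"
  then have "Cauchy (\<lambda>n. Rep_endo (X n))"
    by (simp add: Cauchy_def dist_Rep_endo)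
  then obtain L where "(\<lambda>n. Rep_endo (X n)) \<longlonglongrightarrow> L"
    by (auto simp: Cauchy_convergent_iff convergent_def)
  then have "X \<longlonglongrightarrow> Abs_endo L"
    by (simp add: tendsto_iff flip: dist_Rep_endo add: Abs_endo_inverse)
  then show "convergent X"
    by (auto simp: convergent_def)
qed

definition endo_of_matrix :: "real^'n^'n \<Rightarrow> (real^'n) endo" where
  "endo_of_matrix A = Abs_endo (Blinfun ((*v) A))"

definition matrix_of_endo :: "(real^'n) endo \<Rightarrow> real^'n^'n" where
  "matrix_of_endo x = matrix (blinfun_apply (Rep_endo x))"

lemma blinfun_apply_endo_of_matrix [simp]:
  "blinfun_apply (Rep_endo (endo_of_matrix A)) = (*v) A"
  by (simp add: endo_of_matrix_def Abs_endo_inverse bounded_linear_Blinfun_apply)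

lemma endo_eqI: "(\<And>v. blinfun_apply (Rep_endo x) v = blinfun_apply (Rep_endo y) v) \<Longrightarrow> x = y"
  by (metis blinfun_eqI Rep_endo_inject)

lemma matrix_of_endo_of_matrix [simp]: "matrix_of_endo (endo_of_matrix A) = A"
  by (simp add: matrix_of_endo_def)

lemma endo_of_matrix_of_endo [simp]: "endo_of_matrix (matrix_of_endo x) = x"
  by (rule endo_eqI) (simp add: matrix_of_endo_def matrix_works blinfun.bounded_linear_right)

lemma endo_of_matrix_inject: "endo_of_matrix A = endo_of_matrix B \<longleftrightarrow> A = B"
  by (metis matrix_of_endo_of_matrix)

lemma endo_of_matrix_mult: "endo_of_matrix (A ** B) = endo_of_matrix A * endo_of_matrix B"
  by (rule endo_eqI) (simp add: times_endo.rep_eq matrix_vector_mul_assoc)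

lemma endo_of_matrix_commute_iff:
  "endo_of_matrix A * endo_of_matrix B = endo_of_matrix B * endo_of_matrix A \<longleftrightarrow> A ** B = B ** A"
  by (simp flip: endo_of_matrix_mult add: endo_of_matrix_inject)

lemma endo_of_matrix_mat_1: "endo_of_matrix (mat 1) = 1"
  by (rule endo_eqI) (simp add: one_endo.rep_eq)

lemma linear_endo_of_matrix: "linear endo_of_matrix"
  by (rule linearI; rule endo_eqI)
    (simp_all add: plus_endo.rep_eq scaleR_endo.rep_eq matrix_vector_mult_add_rdistrib
      scaleR_matrix_vector_assoc blinfun.bilinear_simps)

lemma endo_of_matrix_matpow: "endo_of_matrix (matpow A k) = endo_of_matrix A ^ k"
  by (induct k) (simp_all add: endo_of_matrix_mat_1 endo_of_matrix_mult)

lemma bounded_linear_vec_lambda: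
  fixes f :: "'a::real_normed_vector \<Rightarrow> 'b::real_normed_vector^'n"
  assumes "\<And>i. bounded_linear (\<lambda>x. f x $ i)"
  shows "bounded_linear f"
proof -
  interpret component: bounded_linear "\<lambda>x. f x $ i" for i
    by (rule assms)
  obtain K where K: "norm (f x $ i) \<le> norm x * K i" for x i
    using component.bounded by metis
  show ?thesis
  proof (rule bounded_linear_intro)
    fix x y r
    show "f (x + y) = f x + f y" "f (r *\<^sub>R x) = r *\<^sub>R f x"
      by (simp_all add: vec_eq_iff component.add component.scale)
    have "norm (f x) \<le> (\<Sum>i\<in>UNIV. norm (f x $ i))"
      unfolding norm_vec_def by (rule L2_set_le_sum) simp
    also have "\<dots> \<le> norm x * (\<Sum>i\<in>UNIV. K i)"
      by (simp add: sum_distrib_left sum_mono K)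
    finally show "norm (f x) \<le> norm x * (\<Sum>i\<in>UNIV. K i)" .
  qed
qed

lemma bounded_linear_matrix_of_endo: "bounded_linear matrix_of_endo"
proof -
  have "bounded_linear Rep_endo"
    by (rule bounded_linear_intro[where K = 1])
      (simp_all add: plus_endo.rep_eq scaleR_endo.rep_eq norm_endo.rep_eq)
  then have "bounded_linear (\<lambda>x. blinfun_apply (Rep_endo x) (axis j 1) $ i)" for i j
    by (intro bounded_linear_compose[OF bounded_linear_vec_nth]
        bounded_linear_compose[OF blinfun.bounded_linear_left])
  then show ?thesis
    unfolding matrix_of_endo_def matrix_def
    by (intro bounded_linear_vec_lambda) simp
qed

lemma endo_of_matrix_mexp: "endo_of_matrix (mexp A) = exp (endo_of_matrix A)"
proof -
  have "(\<lambda>k. matrix_of_endo (endo_of_matrix A ^ k /\<^sub>R fact k)) sums matrix_of_endo (exp (endo_of_matrix A))"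
    by (rule bounded_linear.sums[OF bounded_linear_matrix_of_endo exp_converges])
  moreover have "endo_of_matrix A ^ k /\<^sub>R fact k = endo_of_matrix ((1 / fact k) *\<^sub>R matpow A k)" for k
    by (simp add: endo_of_matrix_matpow linear_scale[OF linear_endo_of_matrix] divide_inverse_commute)
  ultimately have "(\<lambda>k. (1 / fact k) *\<^sub>R matpow A k) sums matrix_of_endo (exp (endo_of_matrix A))"
    by (simp only: matrix_of_endo_of_matrix)
  then have "mexp A = matrix_of_endo (exp (endo_of_matrix A))"
    unfolding mexp_def by (simp add: sums_iff)
  then show ?thesis
    by simp
qed

lemma mexp_add_commuting:
  assumes "A ** B = B ** A"
  shows "mexp (A + B) = mexp A ** mexp B"
proof -
  have "endo_of_matrix A * endo_of_matrix B = endo_of_matrix B * endo_of_matrix A"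
    using assms by (simp add: endo_of_matrix_commute_iff)
  then have "endo_of_matrix (mexp (A + B)) = endo_of_matrix (mexp A ** mexp B)"
    by (simp add: endo_of_matrix_mexp endo_of_matrix_mult linear_add[OF linear_endo_of_matrix] exp_add_commuting)
  then show ?thesis
    by (simp add: endo_of_matrix_inject)
qed

lemma mexp_add_neg:
  assumes "A ** B = B ** A"
  shows "mexp A ** mexp (- (A + B)) = mexp (- B)"
proof -
  let ?a = "endo_of_matrix A" and ?b = "endo_of_matrix B"
  have "?a * ?b = ?b * ?a"
    using assms by (simp add: endo_of_matrix_commute_iff)
  then have "?a * - (?a + ?b) = - (?a + ?b) * ?a"
    by (simp add: algebra_simps)
  then have "exp ?a * exp (- (?a + ?b)) = exp (- ?b)"
    by (simp flip: exp_add_commuting)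
  then have "endo_of_matrix (mexp A ** mexp (- (A + B))) = endo_of_matrix (mexp (- B))"
    by (simp add: endo_of_matrix_mexp endo_of_matrix_mult linear_add[OF linear_endo_of_matrix]
        linear_neg[OF linear_endo_of_matrix] linear_diff[OF linear_endo_of_matrix])
  then show ?thesis
    by (simp add: endo_of_matrix_inject)
qed

lemma mexp_zero: "mexp 0 = mat 1"
proof -
  have "endo_of_matrix (mexp 0) = endo_of_matrix (mat 1)"
    by (simp add: endo_of_matrix_mexp linear_0[OF linear_endo_of_matrix] endo_of_matrix_mat_1)
  then show ?thesis
    by (simp add: endo_of_matrix_inject)
qed

lemma mult_commute_sum:
  fixes x :: "'a::semiring_0"
  assumes "\<And>i. i \<in> S \<Longrightarrow> x * f i = f i * x"
  shows "x * sum f S = sum f S * x"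
  using assms by (simp add: sum_distrib_left sum_distrib_right)

definition lin_comb ::
    "(nat \<Rightarrow> real^'d^'d) \<Rightarrow> real \<Rightarrow> nat \<Rightarrow> real \<Rightarrow> (nat \<Rightarrow> real) \<Rightarrow> real^'d^'d" where
  "lin_comb A \<gamma> M a b = a *\<^sub>R Lam A \<gamma> M + (\<Sum>m\<in>{1..M}. b m *\<^sub>R A m)"

lemma commute_lin_comb:
  assumes "\<forall>k\<le>M. X ** A k = A k ** X"
  shows "X ** lin_comb A \<gamma> M a b = lin_comb A \<gamma> M a b ** X"
proof -
  let ?x = "endo_of_matrix X" and ?e = "\<lambda>k. endo_of_matrix (A k)"
  have e: "?x * ?e k = ?e k * ?x" if "k \<le> M" for k
    using assms that by (simp add: endo_of_matrix_commute_iff)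
  have sq: "?x * (\<Sum>m\<in>{1..M}. ?e m * ?e m) = (\<Sum>m\<in>{1..M}. ?e m * ?e m) * ?x"
    by (rule mult_commute_sum) (metis atLeastAtMost_iff e mult.assoc)
  have comb: "?x * (\<Sum>m\<in>{1..M}. b m *\<^sub>R ?e m) = (\<Sum>m\<in>{1..M}. b m *\<^sub>R ?e m) * ?x"
    by (rule mult_commute_sum) (simp add: e)
  have expand: "endo_of_matrix (lin_comb A \<gamma> M a b)
      = a *\<^sub>R (?e 0 - \<gamma> *\<^sub>R (\<Sum>m\<in>{1..M}. ?e m * ?e m)) + (\<Sum>m\<in>{1..M}. b m *\<^sub>R ?e m)"
    unfolding lin_comb_def Lam_def
    by (simp add: linear_add[OF linear_endo_of_matrix] linear_diff[OF linear_endo_of_matrix]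
        linear_scale[OF linear_endo_of_matrix] linear_sum[OF linear_endo_of_matrix] endo_of_matrix_mult)
  show ?thesis
    unfolding endo_of_matrix_commute_iff[symmetric] expand
    by (simp only: distrib_left distrib_right right_diff_distrib left_diff_distrib
        mult_scaleR_left mult_scaleR_right e[OF le0] sq comb)
qed

lemma lin_combs_commute:
  assumes "\<forall>m\<le>M. \<forall>k\<le>M. A m ** A k = A k ** A m"
  shows "lin_comb A \<gamma> M a b ** lin_comb A \<gamma> M a' b' = lin_comb A \<gamma> M a' b' ** lin_comb A \<gamma> M a b"
proof (rule commute_lin_comb)
  have "A k ** lin_comb A \<gamma> M a b = lin_comb A \<gamma> M a b ** A k" if "k \<le> M" for k
    using assms that by (intro commute_lin_comb) simp
  then show "\<forall>k\<le>M. lin_comb A \<gamma> M a b ** A k = A k ** lin_comb A \<gamma> M a b"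
    by simp
qed

lemma dLi_eq_lin_comb: "dLi A \<gamma> M s Z n i = lin_comb A \<gamma> M (cst Z s 0 n i) (\<lambda>m. cst Z s m n i)"
  by (simp add: dLi_def lin_comb_def)

lemma dL_eq_lin_comb: "dL A \<gamma> M s z n = lin_comb A \<gamma> M (cfull z s 0 n) (\<lambda>m. cfull z s m n)"
  by (simp add: dL_def lin_comb_def)

lemma Lbar_eq_lin_comb: "Lbar A \<gamma> M t0 tn W n = lin_comb A \<gamma> M (tn - t0) (\<lambda>m. W n m - W 0 m)"
  by (simp add: Lbar_def lin_comb_def)

lemma Lgi_eq_Lbar_plus_dLi: "Lgi A \<gamma> M s Z t0 tn W n i = Lbar A \<gamma> M t0 tn W n + dLi A \<gamma> M s Z n i"
  by (simp add: Lgi_def Lbar_def dLi_def algebra_simps sum.distrib sum_subtractf)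

lemma Lbar_step:
  assumes "tn' = tn + cfull z s 0 n" and "\<forall>m\<in>{1..M}. W n' m = W n m + cfull z s m n"
  shows "Lbar A \<gamma> M t0 tn' W n' = dL A \<gamma> M s z n + Lbar A \<gamma> M t0 tn W n"
  using assms by (simp add: Lbar_def dL_def algebra_simps sum.distrib sum_subtractf)

lemma grid_Suc: "grid t0 T N (Suc n) = grid t0 T N n + (T - t0) / real N"
  by (simp add: grid_def distrib_right add_divide_distrib)

lemma rk_incr_cong:
  "(\<And>j. j < s \<Longrightarrow> H j = H' j) \<Longrightarrow> rk_incr s M w L tau G H = rk_incr s M w L tau G H'"
  unfolding rk_incr_def by (intro sum.cong refl) auto

lemma mexp_rk_incr_shift:
  assumes "\<And>j. j < s \<Longrightarrow> E ** D j = D j ** E"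
  shows "mexp E *v rk_incr s M w (\<lambda>j. E + D j) tau G H = rk_incr s M w D tau G (\<lambda>j. mexp E *v H j)"
proof -
  have "mexp E *v (mexp (- (E + D j)) *v x) = mexp (- D j) *v x"
    and "mexp (E + D j) *v y = mexp (D j) *v (mexp E *v y)" if "j < s" for j x y
    using mexp_add_neg[OF assms[OF that]] mexp_add_commuting[OF assms[OF that, symmetric]]
    by (simp_all only: matrix_vector_mul_assoc add.commute)
  moreover have "linear ((*v) (mexp E))"
    by simp
  ultimately show ?thesis
    unfolding rk_incr_def
    by (simp add: linear_sum[of "(*v) (mexp E)", unfolded o_def] matrix_vector_mult_scaleR)
qed

lemma mexp_Lbar_rk_incr:
  assumes "\<forall>m\<le>M. \<forall>k\<le>M. A m ** A k = A k ** A m"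
  shows "mexp (Lbar A \<gamma> M t0 tn W n) *v rk_incr s M w (Lgi A \<gamma> M s Z t0 tn W n) tau G H
       = rk_incr s M w (dLi A \<gamma> M s Z n) tau G (\<lambda>j. mexp (Lbar A \<gamma> M t0 tn W n) *v H j)"
proof -
  have "Lgi A \<gamma> M s Z t0 tn W n = (\<lambda>j. Lbar A \<gamma> M t0 tn W n + dLi A \<gamma> M s Z n j)"
    by (simp add: fun_eq_iff Lgi_eq_Lbar_plus_dLi)
  moreover have
    "Lbar A \<gamma> M t0 tn W n ** dLi A \<gamma> M s Z n j = dLi A \<gamma> M s Z n j ** Lbar A \<gamma> M t0 tn W n" for j
    unfolding Lbar_eq_lin_comb dLi_eq_lin_comb using assms by (rule lin_combs_commute)
  ultimately show ?thesis
    by (simp add: mexp_rk_incr_shift)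
qed

lemma glob_stages_imp_loc_stages:
  assumes "\<forall>m\<le>M. \<forall>k\<le>M. A m ** A k = A k ** A m"
    and "glob_stages A g \<gamma> M s Z t0 T N W n v H"
  defines "E \<equiv> mexp (Lbar A \<gamma> M t0 (grid t0 T N n) W n)"
  shows "loc_stages A g \<gamma> M s Z t0 T N n (E *v v) (\<lambda>i. E *v H i)"
  using assms(2) unfolding glob_stages_def loc_stages_def E_def
  by (simp add: matrix_vector_right_distrib mexp_Lbar_rk_incr[OF assms(1)])

theorem lemma4:
  fixes A :: "nat \<Rightarrow> real^'d^'d"
    and g :: "nat \<Rightarrow> real \<Rightarrow> real^'d \<Rightarrow> real^'d"
    and \<gamma> t0 T :: real and M N s :: nat
    and Z :: "nat \<Rightarrow> nat \<Rightarrow> nat \<Rightarrow> nat \<Rightarrow> real"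
    and z :: "nat \<Rightarrow> nat \<Rightarrow> nat \<Rightarrow> real"
    and x0 :: "real^'d"
    and Y :: "nat \<Rightarrow> real^'d" and HL :: "nat \<Rightarrow> nat \<Rightarrow> real^'d"
    and V :: "nat \<Rightarrow> real^'d" and HG :: "nat \<Rightarrow> nat \<Rightarrow> real^'d"
    and W :: "nat \<Rightarrow> nat \<Rightarrow> real"
  assumes "t0 < T" and "0 < N"
    and comm: "\<forall>m\<le>M. \<forall>k\<le>M. A m ** A k = A k ** A m"
    and gam: "\<gamma> = 1/2 \<or> \<gamma> = 0"
    and c0: "\<forall>n<N. cfull z s 0 n = (T - t0) / real N"
    \<comment> \<open>local SRK Lawson scheme\<close>
    and Y0: "Y 0 = x0"
    and HL_st: "\<forall>n<N. loc_stages A g \<gamma> M s Z t0 T N n (Y n) (HL n)"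
    and HL_uniq: "\<forall>n<N. \<forall>H. loc_stages A g \<gamma> M s Z t0 T N n (Y n) H \<longrightarrow> (\<forall>i<s. H i = HL n i)"
    and Y_step: "\<forall>n<N. Y (Suc n) = mexp (dL A \<gamma> M s z n) *v
        (Y n + rk_incr s M (\<lambda>m i. z m n i) (dLi A \<gamma> M s Z n)
                 (\<lambda>i. grid t0 T N n + cst Z s 0 n i) (gtil A g \<gamma> M) (HL n))"
    \<comment> \<open>global SRK Lawson scheme\<close>
    and W00: "W 0 0 = t0"
    and W_step: "\<forall>n<N. \<forall>m\<le>M. W (Suc n) m = W n m + cfull z s m n"
    and V0: "V 0 = x0"
    and HG_st: "\<forall>n<N. glob_stages A g \<gamma> M s Z t0 T N W n (V n) (HG n)"
    and HG_uniq: "\<forall>n<N. \<forall>H. glob_stages A g \<gamma> M s Z t0 T N W n (V n) H \<longrightarrow> (\<forall>i<s. H i = HG n i)"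
    and V_step: "\<forall>n<N. V (Suc n) = V n + rk_incr s M (\<lambda>m i. z m n i) (Lgi A \<gamma> M s Z t0 (grid t0 T N n) W n)
                 (\<lambda>i. grid t0 T N n + cst Z s 0 n i) (gtil A g \<gamma> M) (HG n)"
  shows "\<forall>n\<le>N. mexp (Lbar A \<gamma> M t0 (grid t0 T N n) W n) *v V n = Y n"
proof -
  let ?E = "\<lambda>n. Lbar A \<gamma> M t0 (grid t0 T N n) W n"
  let ?incr = "\<lambda>n. rk_incr s M (\<lambda>m i. z m n i) (dLi A \<gamma> M s Z n)
                 (\<lambda>i. grid t0 T N n + cst Z s 0 n i) (gtil A g \<gamma> M)"
  have step: "mexp (?E (Suc n)) *v V (Suc n) = Y (Suc n)"
    if n: "n < N" and IH: "mexp (?E n) *v V n = Y n" for n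
  proof -
    have "loc_stages A g \<gamma> M s Z t0 T N n (Y n) (\<lambda>i. mexp (?E n) *v HG n i)"
      using glob_stages_imp_loc_stages[OF comm HG_st[rule_format, OF n]] IH by simp
    then have "\<forall>i<s. mexp (?E n) *v HG n i = HL n i"
      using HL_uniq n by blast
    then have "mexp (?E n) *v V (Suc n) = Y n + ?incr n (HL n)"
      using V_step n IH
      by (simp add: matrix_vector_right_distrib mexp_Lbar_rk_incr[OF comm] cong: rk_incr_cong)
    moreover have "?E (Suc n) = dL A \<gamma> M s z n + ?E n"
      by (rule Lbar_step) (simp_all add: grid_Suc c0 W_step n)
    moreover have "dL A \<gamma> M s z n ** ?E n = ?E n ** dL A \<gamma> M s z n"
      unfolding dL_eq_lin_comb Lbar_eq_lin_comb using comm by (rule lin_combs_commute)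
    ultimately show ?thesis
      using Y_step n by (simp add: mexp_add_commuting flip: matrix_vector_mul_assoc)
  qed
  have base: "mexp (?E 0) *v V 0 = Y 0"
    using V0 Y0 by (simp add: Lbar_def grid_def mexp_zero)
  show ?thesis
  proof (intro allI impI)
    show "n \<le> N \<Longrightarrow> mexp (?E n) *v V n = Y n" for n
      by (induction n) (simp_all add: base step)
  qed
qed

end
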